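(* With notation as in the context, let $N$ be a $\Gamma$-module and consider the map $\circ\pi\colon\mathcal{H}om_\Gamma(\mathcal{P}_{\le n},N)\to\mathcal{H}om_\Gamma(\mathcal{P},N)$. Use the identifications $\mathrm{H}^i(\mathcal{H}om_\Gamma(\mathcal{P},N))\cong\mathrm{Ext}^i_\Gamma(M,N)$ and, since $\mathcal{P}_{\le n}[-n]=\mathcal{P}$, $\mathrm{H}^{i+n}(\mathcal{H}om_\Gamma(\mathcal{P}_{\le n},N))\cong\mathrm{Ext}^i_\Gamma(M,N)$. Then: (1) The map $\mathrm{Hom}_\Gamma(M,N)\to\mathrm{Ext}^n_\Gamma(M,N)$ induced by $\mathrm{H}^n(\circ\pi)$ is surjective, and its kernel is $\operatorname{Im}(\circ d_0)$, where $\mathrm{Hom}_\Gamma(M,N)$ is identified with $\ker(\circ d_1\colon\mathrm{Hom}_\Gamma(P_0,N)\to\mathrm{Hom}_\Gamma(P_1,N))\subseteq \mathrm{Hom}_\Gamma(P_0,N)$ and $\circ d_0\colon\mathrm{Hom}_\Gamma(P_{n-1},N)\to\mathrm{Hom}_\Gamma(P_0,N)$ is precomposition with $d_0$. (2) For every $i>0$, the map $\mathrm{Ext}^i_\Gamma(M,N)\to\mathrm{Ext}^{i+n}_\Gamma(M,N)$ induced by $\mathrm{H}^{i+n}(\circ\pi)$ is an isomorphism.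
   Context: $k$ is a field, $\Gamma$ a $k$-algebra (right modules), $M$ a $\Gamma$-module, $n\ge1$. Given a complex of finitely generated projectives $\mathrm{P}=(0\to P_{n-1}\xrightarrow{d_{n-1}}\cdots\xrightarrow{d_1}P_0\to0)$, $P_i$ in degree $-i$, and $\alpha\colon P_0\to M$, $\beta\colon M\to P_{n-1}$ with $0\to M\xrightarrow{\beta}P_{n-1}\to\cdots\to P_0\xrightarrow{\alpha}M\to0$ exact; $d_0=\beta\circ\alpha$. $\mathcal{P}$ is the projective resolution of $M$ with a copy of $P_i$ (the $\ell$-th copy) in degree $-(\ell n+i)$ for $\ell\ge0$, $0\le i\le n-1$, differential $(-1)^{\ell n}d_i$ from the $\ell$-th copy of $P_i$ to the $\ell$-th copy of $P_{i-1}$ ($i\ge1$) and $(-1)^{\ell n}d_0$ from the $(\ell+1)$-th copy of $P_0$ to the $\ell$-th copy of $P_{n-1}$. $\mathcal{P}_{\le n}$ is the brutal truncation of $\mathcal{P}$ consisting of all copies with $\ell\ge1$ (same degrees and differentials), and $\pi\colon\mathcal{P}\to\mathcal{P}_{\le n}$ is the projection, with kernel the $0$-th copy. $\mathcal{H}om_\Gamma(-,N)$ denotes the Hom complex, graded so that $\mathrm{H}^i(\mathcal{H}om_\Gamma(\mathcal{P},N))\cong\mathrm{Ext}^i_\Gamma(M,N)$; $[1]$ shifts to the left with a sign on the differential. *)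

theory Defs
  imports "HOL-Algebra.Algebra"
begin

text \<open>A right module over the ring R: an abelian group (additive part of the record)
  with a right action ract x r (read: x r).  The multiplicative fields of the
  underlying ring record are unused.\<close>

record ('g, 'a) rmodule = "'a ring" +
  ract :: "'a \<Rightarrow> 'g \<Rightarrow> 'a"

definition right_module :: "'g ring \<Rightarrow> ('g, 'a) rmodule \<Rightarrow> bool" where
  "right_module R M \<longleftrightarrow> ring R \<and> abelian_group M \<and>
     (\<forall>x\<in>carrier M. \<forall>r\<in>carrier R. ract M x r \<in> carrier M) \<and>
     (\<forall>x\<in>carrier M. \<forall>y\<in>carrier M. \<forall>r\<in>carrier R.
        ract M (x \<oplus>\<^bsub>M\<^esub> y) r = ract M x r \<oplus>\<^bsub>M\<^esub> ract M y r) \<and>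
     (\<forall>x\<in>carrier M. \<forall>r\<in>carrier R. \<forall>s\<in>carrier R.
        ract M x (r \<oplus>\<^bsub>R\<^esub> s) = ract M x r \<oplus>\<^bsub>M\<^esub> ract M x s) \<and>
     (\<forall>x\<in>carrier M. \<forall>r\<in>carrier R. \<forall>s\<in>carrier R.
        ract M x (r \<otimes>\<^bsub>R\<^esub> s) = ract M (ract M x r) s) \<and>
     (\<forall>x\<in>carrier M. ract M x \<one>\<^bsub>R\<^esub> = x)"

definition k_algebra :: "'k ring \<Rightarrow> 'g ring \<Rightarrow> ('k \<Rightarrow> 'g) \<Rightarrow> bool" where
  "k_algebra K R \<phi> \<longleftrightarrow> field K \<and> ring R \<and> \<phi> \<in> ring_hom K R \<and>
     (\<forall>a\<in>carrier K. \<forall>r\<in>carrier R. \<phi> a \<otimes>\<^bsub>R\<^esub> r = r \<otimes>\<^bsub>R\<^esub> \<phi> a)"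

definition rmod_hom :: "'g ring \<Rightarrow> ('g, 'a) rmodule \<Rightarrow> ('g, 'b) rmodule \<Rightarrow> ('a \<Rightarrow> 'b) set" where
  "rmod_hom R A B = {f. f \<in> carrier A \<rightarrow>\<^sub>E carrier B \<and>
     (\<forall>x\<in>carrier A. \<forall>y\<in>carrier A. f (x \<oplus>\<^bsub>A\<^esub> y) = f x \<oplus>\<^bsub>B\<^esub> f y) \<and>
     (\<forall>x\<in>carrier A. \<forall>r\<in>carrier R. f (ract A x r) = ract B (f x) r)}"

definition free_rmod :: "'g ring \<Rightarrow> nat \<Rightarrow> ('g, nat \<Rightarrow> 'g) rmodule" where
  "free_rmod R m = \<lparr>carrier = {..<m} \<rightarrow>\<^sub>E carrier R,
     monoid.mult = (\<lambda>v w. undefined), one = undefined,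
     ring.zero = (\<lambda>i\<in>{..<m}. \<zero>\<^bsub>R\<^esub>),
     ring.add = (\<lambda>v w. \<lambda>i\<in>{..<m}. v i \<oplus>\<^bsub>R\<^esub> w i),
     ract = (\<lambda>v r. \<lambda>i\<in>{..<m}. v i \<otimes>\<^bsub>R\<^esub> r)\<rparr>"

definition fg_projective :: "'g ring \<Rightarrow> ('g, 'a) rmodule \<Rightarrow> bool" where
  "fg_projective R P \<longleftrightarrow> (\<exists>m. \<exists>s\<in>rmod_hom R P (free_rmod R m).
      \<exists>p\<in>rmod_hom R (free_rmod R m) P. \<forall>x\<in>carrier P. p (s x) = x)"

text \<open>The additive group Hom_R(A,N), written as a (multiplicative-notation) monoid record.\<close>

definition homgrp :: "'g ring \<Rightarrow> ('g, 'a) rmodule \<Rightarrow> ('g, 'b) rmodule \<Rightarrow> ('a \<Rightarrow> 'b) monoid" where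
  "homgrp R A N = \<lparr>carrier = rmod_hom R A N,
     monoid.mult = (\<lambda>f g. \<lambda>x\<in>carrier A. f x \<oplus>\<^bsub>N\<^esub> g x),
     one = (\<lambda>x\<in>carrier A. \<zero>\<^bsub>N\<^esub>)\<rparr>"

text \<open>A cochain complex concentrated in degrees j >= 0: groups C j and
  differentials delta j : C j -> C (j+1).\<close>

definition cocyc :: "(nat \<Rightarrow> 'a monoid) \<Rightarrow> (nat \<Rightarrow> 'a \<Rightarrow> 'a) \<Rightarrow> nat \<Rightarrow> 'a set" where
  "cocyc C \<delta> j = {f \<in> carrier (C j). \<delta> j f = \<one>\<^bsub>C (Suc j)\<^esub>}"

definition cobd :: "(nat \<Rightarrow> 'a monoid) \<Rightarrow> (nat \<Rightarrow> 'a \<Rightarrow> 'a) \<Rightarrow> nat \<Rightarrow> 'a set" where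
  "cobd C \<delta> j = (if j = 0 then {\<one>\<^bsub>C 0\<^esub>} else \<delta> (j - 1) ` carrier (C (j - 1)))"

definition coh :: "(nat \<Rightarrow> 'a monoid) \<Rightarrow> (nat \<Rightarrow> 'a \<Rightarrow> 'a) \<Rightarrow> nat \<Rightarrow> 'a set monoid" where
  "coh C \<delta> j = ((C j)\<lparr>carrier := cocyc C \<delta> j\<rparr>) Mod (cobd C \<delta> j)"

definition Hmap :: "(nat \<Rightarrow> 'a monoid) \<Rightarrow> (nat \<Rightarrow> 'a \<Rightarrow> 'a) \<Rightarrow> (nat \<Rightarrow> 'a monoid) \<Rightarrow>
    (nat \<Rightarrow> 'a \<Rightarrow> 'a) \<Rightarrow> (nat \<Rightarrow> 'a \<Rightarrow> 'a) \<Rightarrow> nat \<Rightarrow> 'a set \<Rightarrow> 'a set" where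
  "Hmap C \<delta> C' \<delta>' \<phi> j = (\<lambda>Xc\<in>carrier (coh C \<delta> j).
      r_coset (C' j) (cobd C' \<delta>' j) (\<phi> j (SOME x. x \<in> Xc)))"

definition d0fun :: "(nat \<Rightarrow> ('g, 'p) rmodule) \<Rightarrow> ('p \<Rightarrow> 'm) \<Rightarrow> ('m \<Rightarrow> 'p) \<Rightarrow> 'p \<Rightarrow> 'p" where
  "d0fun P \<alpha> \<beta> = (\<lambda>x\<in>carrier (P 0). \<beta> (\<alpha> x))"

definition sgn_neg :: "('g, 'p) rmodule \<Rightarrow> nat \<Rightarrow> 'p \<Rightarrow> 'p" where
  "sgn_neg B e y = (if even e then y else \<ominus>\<^bsub>B\<^esub> y)"

text \<open>Differential of the resolution from degree -(j+1) to degree -j.  Writing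
  j+1 = l n + i with 0 <= i < n: the object in degree -(j+1) is the l-th copy of P_i.
  If i >= 1 the differential is (-1)^(l n) d_i; if i = 0 (then l >= 1) it is
  (-1)^((l-1) n) d_0 from the l-th copy of P_0 to the (l-1)-th copy of P_{n-1}.\<close>

definition dP :: "nat \<Rightarrow> (nat \<Rightarrow> ('g, 'p) rmodule) \<Rightarrow> (nat \<Rightarrow> 'p \<Rightarrow> 'p) \<Rightarrow> ('p \<Rightarrow> 'p) \<Rightarrow> nat \<Rightarrow> 'p \<Rightarrow> 'p" where
  "dP n P d d0 j = (let l = Suc j div n; i = Suc j mod n in
     if i \<noteq> 0 then (\<lambda>x\<in>carrier (P i). sgn_neg (P (i - 1)) (l * n) (d i x))
     else (\<lambda>x\<in>carrier (P 0). sgn_neg (P (n - 1)) ((l - 1) * n) (d0 x)))"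

definition HomPc :: "'g ring \<Rightarrow> ('g, 'b) rmodule \<Rightarrow> nat \<Rightarrow> (nat \<Rightarrow> ('g, 'p) rmodule) \<Rightarrow>
    nat \<Rightarrow> ('p \<Rightarrow> 'b) monoid" where
  "HomPc R N n P j = homgrp R (P (j mod n)) N"

definition delPc :: "nat \<Rightarrow> (nat \<Rightarrow> ('g, 'p) rmodule) \<Rightarrow> (nat \<Rightarrow> 'p \<Rightarrow> 'p) \<Rightarrow> ('p \<Rightarrow> 'p) \<Rightarrow>
    nat \<Rightarrow> ('p \<Rightarrow> 'b) \<Rightarrow> ('p \<Rightarrow> 'b)" where
  "delPc n P d d0 j f = (\<lambda>x\<in>carrier (P (Suc j mod n)). f (dP n P d d0 j x))"

text \<open>The Hom complex Hom(\<P>_{<=n}, N): equal to Hom(\<P>,N) in degrees >= n and zero below.\<close>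

definition HomQc :: "'g ring \<Rightarrow> ('g, 'b) rmodule \<Rightarrow> nat \<Rightarrow> (nat \<Rightarrow> ('g, 'p) rmodule) \<Rightarrow>
    nat \<Rightarrow> ('p \<Rightarrow> 'b) monoid" where
  "HomQc R N n P j = (if n \<le> j then HomPc R N n P j
     else \<lparr>carrier = {\<one>\<^bsub>HomPc R N n P j\<^esub>}, monoid.mult = monoid.mult (HomPc R N n P j),
           one = \<one>\<^bsub>HomPc R N n P j\<^esub>\<rparr>)"

definition delQc :: "'g ring \<Rightarrow> ('g, 'b) rmodule \<Rightarrow> nat \<Rightarrow> (nat \<Rightarrow> ('g, 'p) rmodule) \<Rightarrow>
    (nat \<Rightarrow> 'p \<Rightarrow> 'p) \<Rightarrow> ('p \<Rightarrow> 'p) \<Rightarrow> nat \<Rightarrow> ('p \<Rightarrow> 'b) \<Rightarrow> ('p \<Rightarrow> 'b)" where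
  "delQc R N n P d d0 j = (if n \<le> j then delPc n P d d0 j
     else (\<lambda>f. \<one>\<^bsub>HomPc R N n P (Suc j)\<^esub>))"

text \<open>The cochain map (precomposition with pi): identity in degrees >= n, zero below.\<close>

definition piQ :: "'g ring \<Rightarrow> ('g, 'b) rmodule \<Rightarrow> nat \<Rightarrow> (nat \<Rightarrow> ('g, 'p) rmodule) \<Rightarrow>
    nat \<Rightarrow> ('p \<Rightarrow> 'b) \<Rightarrow> ('p \<Rightarrow> 'b)" where
  "piQ R N n P j f = (if n \<le> j then f else \<one>\<^bsub>HomPc R N n P j\<^esub>)"

end

theory Submission
  imports Defs
begin

(* Hom(P_{<=n}, N) coincides with Hom(P, N) in degrees >= n and vanishes below, and
   composition with pi is the identity in degrees >= n.  In degree n the truncated complex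
   therefore has no coboundaries, so H^n(o pi) is the quotient map from the n-cocycles of
   Hom(P, N) onto H^n: it is surjective and its kernel consists of the n-coboundaries, which
   are the maps f o d_0.  In degrees i + n with i > 0 even the incoming differentials agree,
   so H^{i+n}(o pi) is the identity.  Finally P is n-periodic up to the sign (-1)^n in its
   differentials; a sign changes neither kernels nor images, so H^{i+n} and H^i of Hom(P, N)
   are the same group. *)

section \<open>Right modules and their Hom groups\<close>

lemma additive_abelian_group_hom:
  assumes A: "abelian_group A" and B: "abelian_group B"
    and f: "f \<in> carrier A \<rightarrow> carrier B"
    and add: "\<And>x y. x \<in> carrier A \<Longrightarrow> y \<in> carrier A \<Longrightarrow> f (x \<oplus>\<^bsub>A\<^esub> y) = f x \<oplus>\<^bsub>B\<^esub> f y"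
  shows "abelian_group_hom A B f"
proof (rule abelian_group_homI[OF A B])
  show "group_hom (add_monoid A) (add_monoid B) f"
    using A B f add
    by (auto intro!: group_hom.intro group_hom_axioms.intro homI
        simp: abelian_group.a_group)
qed

lemma right_module_abelian_group: "right_module R A \<Longrightarrow> abelian_group A"
  by (simp add: right_module_def)

lemma right_module_add_closed:
  assumes "right_module R A" "x \<in> carrier A" "y \<in> carrier A"
  shows "x \<oplus>\<^bsub>A\<^esub> y \<in> carrier A"
proof -
  interpret abelian_group A by (rule right_module_abelian_group[OF assms(1)])
  show ?thesis using assms(2,3) by simp
qed

lemma right_module_ract_closed:
  "right_module R A \<Longrightarrow> x \<in> carrier A \<Longrightarrow> r \<in> carrier R \<Longrightarrow> ract A x r \<in> carrier A"
  unfolding right_module_def by blast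

lemma right_module_ract_add:
  "right_module R A \<Longrightarrow> x \<in> carrier A \<Longrightarrow> y \<in> carrier A \<Longrightarrow> r \<in> carrier R \<Longrightarrow>
     ract A (x \<oplus>\<^bsub>A\<^esub> y) r = ract A x r \<oplus>\<^bsub>A\<^esub> ract A y r"
  unfolding right_module_def by blast

lemma right_module_ract_hom:
  assumes A: "right_module R A" and r: "r \<in> carrier R"
  shows "abelian_group_hom A A (\<lambda>x. ract A x r)"
proof (rule additive_abelian_group_hom)
  show "(\<lambda>x. ract A x r) \<in> carrier A \<rightarrow> carrier A"
    using right_module_ract_closed[OF A _ r] by blast
qed (simp_all add: right_module_ract_add[OF A _ _ r] right_module_abelian_group[OF A])

lemma rmod_hom_closed: "f \<in> rmod_hom R A B \<Longrightarrow> x \<in> carrier A \<Longrightarrow> f x \<in> carrier B"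
  by (auto simp: rmod_hom_def)

lemma rmod_hom_add:
  "f \<in> rmod_hom R A B \<Longrightarrow> x \<in> carrier A \<Longrightarrow> y \<in> carrier A \<Longrightarrow>
     f (x \<oplus>\<^bsub>A\<^esub> y) = f x \<oplus>\<^bsub>B\<^esub> f y"
  by (simp add: rmod_hom_def)

lemma rmod_hom_ract:
  "f \<in> rmod_hom R A B \<Longrightarrow> x \<in> carrier A \<Longrightarrow> r \<in> carrier R \<Longrightarrow>
     f (ract A x r) = ract B (f x) r"
  by (simp add: rmod_hom_def)

lemma rmod_hom_abelian_group_hom:
  assumes "right_module R A" "right_module R B" "f \<in> rmod_hom R A B"
  shows "abelian_group_hom A B f"
  using assms
  by (intro additive_abelian_group_hom) (simp_all add: right_module_abelian_group rmod_hom_closed rmod_hom_add)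

lemma rmod_hom_compose:
  assumes A: "right_module R A" and g: "g \<in> rmod_hom R A B" and h: "h \<in> rmod_hom R B C"
  shows "(\<lambda>x\<in>carrier A. h (g x)) \<in> rmod_hom R A C"
  using right_module_ract_closed[OF A] right_module_add_closed[OF A]
    rmod_hom_closed[OF g] rmod_hom_closed[OF h] rmod_hom_add[OF g] rmod_hom_add[OF h]
    rmod_hom_ract[OF g] rmod_hom_ract[OF h]
  by (simp add: rmod_hom_def)

lemma rmod_hom_sum:
  assumes A: "right_module R A" and N: "right_module R N"
    and f: "f \<in> rmod_hom R A N" and g: "g \<in> rmod_hom R A N"
  shows "(\<lambda>x\<in>carrier A. f x \<oplus>\<^bsub>N\<^esub> g x) \<in> rmod_hom R A N"
  unfolding rmod_hom_def
proof (intro CollectI conjI ballI)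
  interpret N: abelian_group N by (rule right_module_abelian_group[OF N])
  show "(\<lambda>x\<in>carrier A. f x \<oplus>\<^bsub>N\<^esub> g x) \<in> carrier A \<rightarrow>\<^sub>E carrier N"
    using rmod_hom_closed[OF f] rmod_hom_closed[OF g] by simp
  fix x y assume x: "x \<in> carrier A" and y: "y \<in> carrier A"
  have "f x \<in> carrier N" "f y \<in> carrier N" "g x \<in> carrier N" "g y \<in> carrier N"
    using rmod_hom_closed[OF f] rmod_hom_closed[OF g] x y by auto
  then show "(\<lambda>x\<in>carrier A. f x \<oplus>\<^bsub>N\<^esub> g x) (x \<oplus>\<^bsub>A\<^esub> y) =
      (\<lambda>x\<in>carrier A. f x \<oplus>\<^bsub>N\<^esub> g x) x \<oplus>\<^bsub>N\<^esub> (\<lambda>x\<in>carrier A. f x \<oplus>\<^bsub>N\<^esub> g x) y"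
    using x y right_module_add_closed[OF A x y]
    by (simp add: rmod_hom_add[OF f] rmod_hom_add[OF g] N.a_ac)
next
  fix x r assume x: "x \<in> carrier A" and r: "r \<in> carrier R"
  then show "(\<lambda>x\<in>carrier A. f x \<oplus>\<^bsub>N\<^esub> g x) (ract A x r) =
      ract N ((\<lambda>x\<in>carrier A. f x \<oplus>\<^bsub>N\<^esub> g x) x) r"
    using right_module_ract_closed[OF A x r] rmod_hom_closed[OF f x] rmod_hom_closed[OF g x]
    by (simp add: rmod_hom_ract[OF f] rmod_hom_ract[OF g] right_module_ract_add[OF N])
qed

lemma rmod_hom_uminus:
  assumes A: "right_module R A" and N: "right_module R N" and f: "f \<in> rmod_hom R A N"
  shows "(\<lambda>x\<in>carrier A. \<ominus>\<^bsub>N\<^esub> f x) \<in> rmod_hom R A N"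
  unfolding rmod_hom_def
proof (intro CollectI conjI ballI)
  interpret N: abelian_group N by (rule right_module_abelian_group[OF N])
  show "(\<lambda>x\<in>carrier A. \<ominus>\<^bsub>N\<^esub> f x) \<in> carrier A \<rightarrow>\<^sub>E carrier N"
    using rmod_hom_closed[OF f] by simp
  fix x y assume x: "x \<in> carrier A" and y: "y \<in> carrier A"
  then show "(\<lambda>x\<in>carrier A. \<ominus>\<^bsub>N\<^esub> f x) (x \<oplus>\<^bsub>A\<^esub> y) =
      (\<lambda>x\<in>carrier A. \<ominus>\<^bsub>N\<^esub> f x) x \<oplus>\<^bsub>N\<^esub> (\<lambda>x\<in>carrier A. \<ominus>\<^bsub>N\<^esub> f x) y"
    using right_module_add_closed[OF A x y] rmod_hom_closed[OF f x] rmod_hom_closed[OF f y]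
    by (simp add: rmod_hom_add[OF f] N.minus_add)
next
  fix x r assume x: "x \<in> carrier A" and r: "r \<in> carrier R"
  then show "(\<lambda>x\<in>carrier A. \<ominus>\<^bsub>N\<^esub> f x) (ract A x r) =
      ract N ((\<lambda>x\<in>carrier A. \<ominus>\<^bsub>N\<^esub> f x) x) r"
    using right_module_ract_closed[OF A x r] rmod_hom_closed[OF f x]
      abelian_group_hom.hom_a_inv[OF right_module_ract_hom[OF N r]]
    by (simp add: rmod_hom_ract[OF f])
qed

lemma rmod_hom_zero_map:
  assumes A: "right_module R A" and N: "right_module R N"
  shows "(\<lambda>x\<in>carrier A. \<zero>\<^bsub>N\<^esub>) \<in> rmod_hom R A N"
proof -
  interpret N: abelian_group N by (rule right_module_abelian_group[OF N])
  show ?thesis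
    using right_module_ract_closed[OF A] right_module_add_closed[OF A]
      abelian_group_hom.hom_zero[OF right_module_ract_hom[OF N]]
    by (simp add: rmod_hom_def)
qed

lemma homgrp_simps:
  "carrier (homgrp R A N) = rmod_hom R A N"
  "f \<otimes>\<^bsub>homgrp R A N\<^esub> g = (\<lambda>x\<in>carrier A. f x \<oplus>\<^bsub>N\<^esub> g x)"
  "\<one>\<^bsub>homgrp R A N\<^esub> = (\<lambda>x\<in>carrier A. \<zero>\<^bsub>N\<^esub>)"
  by (simp_all add: homgrp_def)

lemma comm_group_homgrp:
  assumes A: "right_module R A" and N: "right_module R N"
  shows "comm_group (homgrp R A N)"
proof -
  interpret N: abelian_group N by (rule right_module_abelian_group[OF N])
  note closed = rmod_hom_closed[where R = R and A = A and B = N]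
  show ?thesis
  proof (rule comm_groupI, unfold homgrp_simps)
    fix f g assume "f \<in> rmod_hom R A N" "g \<in> rmod_hom R A N"
    then show "(\<lambda>x\<in>carrier A. f x \<oplus>\<^bsub>N\<^esub> g x) \<in> rmod_hom R A N"
      by (rule rmod_hom_sum[OF A N])
  next
    show "(\<lambda>x\<in>carrier A. \<zero>\<^bsub>N\<^esub>) \<in> rmod_hom R A N"
      by (rule rmod_hom_zero_map[OF A N])
  next
    fix f g h assume "f \<in> rmod_hom R A N" "g \<in> rmod_hom R A N" "h \<in> rmod_hom R A N"
    then show "(\<lambda>x\<in>carrier A. (\<lambda>x\<in>carrier A. f x \<oplus>\<^bsub>N\<^esub> g x) x \<oplus>\<^bsub>N\<^esub> h x) =
        (\<lambda>x\<in>carrier A. f x \<oplus>\<^bsub>N\<^esub> (\<lambda>x\<in>carrier A. g x \<oplus>\<^bsub>N\<^esub> h x) x)"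
      using closed by (auto simp: N.a_assoc intro!: restrict_ext)
  next
    fix f g assume "f \<in> rmod_hom R A N" "g \<in> rmod_hom R A N"
    then show "(\<lambda>x\<in>carrier A. f x \<oplus>\<^bsub>N\<^esub> g x) = (\<lambda>x\<in>carrier A. g x \<oplus>\<^bsub>N\<^esub> f x)"
      using closed by (auto simp: N.a_comm intro!: restrict_ext)
  next
    fix f assume f: "f \<in> rmod_hom R A N"
    have "f x = undefined" if "x \<notin> carrier A" for x
      using f that by (auto simp: rmod_hom_def)
    then show "(\<lambda>x\<in>carrier A. (\<lambda>x\<in>carrier A. \<zero>\<^bsub>N\<^esub>) x \<oplus>\<^bsub>N\<^esub> f x) = f"
      using closed[OF f] by (auto intro!: ext)
  next
    fix f assume f: "f \<in> rmod_hom R A N"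
    show "\<exists>g\<in>rmod_hom R A N. (\<lambda>x\<in>carrier A. g x \<oplus>\<^bsub>N\<^esub> f x) = (\<lambda>x\<in>carrier A. \<zero>\<^bsub>N\<^esub>)"
      using rmod_hom_uminus[OF A N f] closed[OF f] 
      by (intro bexI[of _ "\<lambda>x\<in>carrier A. \<ominus>\<^bsub>N\<^esub> f x"]) (auto simp: N.l_neg intro!: restrict_ext)
  qed
qed

lemma homgrp_inv:
  assumes A: "right_module R A" and N: "right_module R N" and f: "f \<in> rmod_hom R A N"
  shows "inv\<^bsub>homgrp R A N\<^esub> f = (\<lambda>x\<in>carrier A. \<ominus>\<^bsub>N\<^esub> f x)"
proof -
  interpret G: comm_group "homgrp R A N" by (rule comm_group_homgrp[OF A N])
  interpret N: abelian_group N by (rule right_module_abelian_group[OF N])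
  show ?thesis
  proof (rule G.inv_equality)
    show "(\<lambda>x\<in>carrier A. \<ominus>\<^bsub>N\<^esub> f x) \<otimes>\<^bsub>homgrp R A N\<^esub> f = \<one>\<^bsub>homgrp R A N\<^esub>"
      using rmod_hom_closed[OF f] by (auto simp: homgrp_simps N.l_neg intro!: restrict_ext)
  qed (use f rmod_hom_uminus[OF A N f] in \<open>simp_all add: homgrp_simps\<close>)
qed

lemma homgrp_precompose_hom:
  assumes B: "right_module R B" and g: "g \<in> rmod_hom R B A"
  shows "(\<lambda>f. \<lambda>x\<in>carrier B. f (g x)) \<in> hom (homgrp R A N) (homgrp R B N)"
proof (rule homI)
  fix f assume "f \<in> carrier (homgrp R A N)"
  then show "(\<lambda>x\<in>carrier B. f (g x)) \<in> carrier (homgrp R B N)"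
    using rmod_hom_compose[OF B g] by (simp add: homgrp_simps)
qed (use rmod_hom_closed[OF g] in \<open>auto simp: homgrp_simps intro!: restrict_ext\<close>)

lemma sgn_neg_closed: "abelian_group B \<Longrightarrow> y \<in> carrier B \<Longrightarrow> sgn_neg B e y \<in> carrier B"
  by (simp add: sgn_neg_def abelian_group.a_inv_closed)

lemma sgn_neg_sgn_neg:
  "abelian_group B \<Longrightarrow> y \<in> carrier B \<Longrightarrow> sgn_neg B e (sgn_neg B e' y) = sgn_neg B (e + e') y"
  by (simp add: sgn_neg_def abelian_group.minus_minus)

lemma sgn_neg_zero:
  assumes "abelian_group B" shows "sgn_neg B e \<zero>\<^bsub>B\<^esub> = \<zero>\<^bsub>B\<^esub>"
proof -
  interpret abelian_group B by fact
  show ?thesis using add.inv_one by (simp add: sgn_neg_def)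
qed

lemma rmod_hom_sgn_neg:
  assumes "right_module R A" "right_module R B" "g \<in> rmod_hom R A B" "y \<in> carrier A"
  shows "g (sgn_neg A e y) = sgn_neg B e (g y)"
  using abelian_group_hom.hom_a_inv[OF rmod_hom_abelian_group_hom[OF assms(1-3)] assms(4)]
  by (simp add: sgn_neg_def)

lemma rmod_hom_sgn_neg_closed:
  assumes A: "right_module R A" and B: "right_module R B" and g: "g \<in> rmod_hom R A B"
  shows "(\<lambda>x\<in>carrier A. sgn_neg B e (g x)) \<in> rmod_hom R A B"
proof (cases "even e")
  case True
  have "(\<lambda>x\<in>carrier A. g x) = g"
    using g by (auto simp: rmod_hom_def)
  with g True show ?thesis by (simp add: sgn_neg_def)
next
  case False
  then show ?thesis using rmod_hom_uminus[OF A B g] by (simp add: sgn_neg_def)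
qed

section \<open>Cohomology of cochain complexes of abelian groups\<close>

lemma (in group) inv_image_carrier: "(\<lambda>x. inv x) ` carrier G = carrier G"
  using inv_closed inv_inv by (auto intro: rev_image_eqI[where x = "inv _"])

lemma r_coset_carrier_update: "r_coset (G\<lparr>carrier := S\<rparr>) H a = r_coset G H a"
  by (simp add: r_coset_def)

lemma coh_carrier:
  "carrier (coh C \<delta> j) = r_coset (C j) (cobd C \<delta> j) ` cocyc C \<delta> j"
  by (auto simp: coh_def FactGroup_def RCOSETS_def r_coset_carrier_update)

lemma coh_one: "\<one>\<^bsub>coh C \<delta> j\<^esub> = cobd C \<delta> j"
  by (simp add: coh_def FactGroup_def)

locale cochain_complex =
  fixes C :: "nat \<Rightarrow> 'a monoid" and \<delta> :: "nat \<Rightarrow> 'a \<Rightarrow> 'a"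
  assumes comm_group_C: "comm_group (C j)"
    and \<delta>_hom: "\<delta> j \<in> hom (C j) (C (Suc j))"
    and \<delta>_\<delta>: "f \<in> carrier (C j) \<Longrightarrow> \<delta> (Suc j) (\<delta> j f) = \<one>\<^bsub>C (Suc (Suc j))\<^esub>"
begin

abbreviation cocycles :: "nat \<Rightarrow> 'a monoid" where
  "cocycles j \<equiv> (C j)\<lparr>carrier := cocyc C \<delta> j\<rparr>"

lemma group_C: "group (C j)"
  using comm_group_C by (rule comm_group.axioms(2))

lemma group_hom_\<delta>: "group_hom (C j) (C (Suc j)) (\<delta> j)"
  using group_C \<delta>_hom by (simp add: group_hom_def group_hom_axioms_def)

lemma subgroup_cocyc: "subgroup (cocyc C \<delta> j) (C j)"
proof -
  have "cocyc C \<delta> j = kernel (C j) (C (Suc j)) (\<delta> j)"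
    by (simp add: cocyc_def kernel_def)
  then show ?thesis using group_hom.subgroup_kernel[OF group_hom_\<delta>] by simp
qed

lemma subgroup_cobd: "subgroup (cobd C \<delta> j) (C j)"
proof (cases j)
  case 0
  then show ?thesis
    using group.triv_subgroup[OF group_C] by (simp add: cobd_def)
next
  case (Suc k)
  then show ?thesis using group_hom.img_is_subgroup[OF group_hom_\<delta>] by (simp add: cobd_def)
qed

lemma cobd_subset_cocyc: "cobd C \<delta> j \<subseteq> cocyc C \<delta> j"
proof (cases j)
  case 0
  then show ?thesis using subgroup.one_closed[OF subgroup_cocyc] by (simp add: cobd_def)
next
  case (Suc k)
  then show ?thesis
    using hom_in_carrier[OF \<delta>_hom] \<delta>_\<delta> by (auto simp: cobd_def cocyc_def)
qed

lemma comm_group_cocycles: "comm_group (cocycles j)"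
proof -
  interpret G: comm_group "C j" by (rule comm_group_C)
  interpret Z: group "cocycles j" by (rule subgroup.subgroup_is_group[OF subgroup_cocyc G.is_group])
  show ?thesis
    using subgroup.mem_carrier[OF subgroup_cocyc] G.m_comm by unfold_locales simp
qed

lemma subgroup_cobd_cocycles: "subgroup (cobd C \<delta> j) (cocycles j)"
  using group.subgroup_incl[OF group_C subgroup_cobd subgroup_cocyc cobd_subset_cocyc] .

lemma group_coh: "group (coh C \<delta> j)"
  unfolding coh_def
  using comm_group.subgroup_imp_normal[OF comm_group_cocycles subgroup_cobd_cocycles]
  by (rule normal.factorgroup_is_group)

lemma coh_class_eq_one_iff:
  assumes z: "z \<in> cocyc C \<delta> j"
  shows "r_coset (C j) (cobd C \<delta> j) z = \<one>\<^bsub>coh C \<delta> j\<^esub> \<longleftrightarrow> z \<in> cobd C \<delta> j"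
proof -
  interpret Z: comm_group "cocycles j" by (rule comm_group_cocycles)
  show ?thesis
    using Z.coset_join1[OF _ _ subgroup_cobd_cocycles] Z.coset_join2[OF _ subgroup_cobd_cocycles] z
    by (auto simp: coh_one r_coset_carrier_update[symmetric])
qed

lemma coh_some_repr:
  assumes Y: "Y \<in> carrier (coh C \<delta> j)"
  shows "r_coset (C j) (cobd C \<delta> j) (SOME x. x \<in> Y) = Y"
proof -
  interpret Z: comm_group "cocycles j" by (rule comm_group_cocycles)
  obtain a where a: "a \<in> cocyc C \<delta> j" and Ya: "Y = r_coset (cocycles j) (cobd C \<delta> j) a"
    using Y by (auto simp: coh_carrier r_coset_carrier_update)
  have "a \<in> Y" using Z.rcos_self[OF _ subgroup_cobd_cocycles] a Ya by simp
  then have "(SOME x. x \<in> Y) \<in> Y" by (rule someI)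
  then show ?thesis
    using Z.repr_independence[OF _ _ subgroup_cobd_cocycles] a Ya
    by (simp add: r_coset_carrier_update)
qed

end

section \<open>The periodic complex and its Hom complex\<close>

locale periodic_complex =
  fixes R :: "'g ring" and n :: nat and P :: "nat \<Rightarrow> ('g, 'p) rmodule"
    and d :: "nat \<Rightarrow> 'p \<Rightarrow> 'p" and d0 :: "'p \<Rightarrow> 'p"
  assumes n_pos: "0 < n"
    and right_module_P: "\<And>i. i < n \<Longrightarrow> right_module R (P i)"
    and d_hom: "\<And>i. 1 \<le> i \<Longrightarrow> i < n \<Longrightarrow> d i \<in> rmod_hom R (P i) (P (i - 1))"
    and d0_hom: "d0 \<in> rmod_hom R (P 0) (P (n - 1))"
    and d_d: "\<And>i x. 1 \<le> i \<Longrightarrow> Suc i < n \<Longrightarrow> x \<in> carrier (P (Suc i)) \<Longrightarrow>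
                d i (d (Suc i) x) = \<zero>\<^bsub>P (i - 1)\<^esub>"
    and d_d0: "\<And>x. 2 \<le> n \<Longrightarrow> x \<in> carrier (P 0) \<Longrightarrow> d (n - 1) (d0 x) = \<zero>\<^bsub>P (n - 2)\<^esub>"
    and d0_d: "\<And>x. 2 \<le> n \<Longrightarrow> x \<in> carrier (P 1) \<Longrightarrow> d0 (d 1 x) = \<zero>\<^bsub>P (n - 1)\<^esub>"
    and d0_d0: "\<And>x. n = 1 \<Longrightarrow> x \<in> carrier (P 0) \<Longrightarrow> d0 (d0 x) = \<zero>\<^bsub>P 0\<^esub>"
begin

definition prev :: "nat \<Rightarrow> nat" where
  "prev i = (if i = 0 then n - 1 else i - 1)"

(* The differential leaving P i, without its sign; D 0 = d0 wraps around to P (n - 1). *)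
definition D :: "nat \<Rightarrow> 'p \<Rightarrow> 'p" where
  "D i = (if i = 0 then d0 else d i)"

definition sgn_exp :: "nat \<Rightarrow> nat" where
  "sgn_exp j = (if Suc j mod n = 0 then (Suc j div n - 1) * n else Suc j div n * n)"

lemma right_module_P_mod: "right_module R (P (j mod n))"
  using right_module_P n_pos by simp

lemma mod_eq_prev: "j mod n = prev (Suc j mod n)"
  using n_pos by (auto simp: prev_def mod_Suc)

lemma D_hom: "i < n \<Longrightarrow> D i \<in> rmod_hom R (P i) (P (prev i))"
  using d_hom d0_hom by (auto simp: D_def prev_def)

lemma D_D:
  assumes i: "i < n" and x: "x \<in> carrier (P i)"
  shows "D (prev i) (D i x) = \<zero>\<^bsub>P (prev (prev i))\<^esub>"
proof -
  consider "i = 0" "n = 1" | "i = 0" "2 \<le> n" | "i = 1" "2 \<le> n" | "2 \<le> i"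
    using i n_pos by linarith
  then show ?thesis
  proof cases
    case 1
    have "prev 0 = 0" unfolding prev_def using 1 by simp
    with 1 show ?thesis using x d0_d0 by (simp add: D_def)
  next
    case 4
    then show ?thesis using d_d[of "i - 1" x] i x by (simp add: D_def prev_def)
  qed (use x d_d0 d0_d in \<open>simp_all add: D_def prev_def numeral_2_eq_2\<close>)
qed

lemma dP_eq:
  "dP n P d d0 j =
     (\<lambda>x\<in>carrier (P (Suc j mod n)). sgn_neg (P (j mod n)) (sgn_exp j) (D (Suc j mod n) x))"
  using mod_eq_prev[of j] by (auto simp: dP_def Let_def D_def sgn_exp_def prev_def)

lemma D_Suc_mod_hom: "D (Suc j mod n) \<in> rmod_hom R (P (Suc j mod n)) (P (j mod n))"
  using D_hom[of "Suc j mod n"] n_pos by (simp add: mod_eq_prev[of j])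

lemma dP_hom: "dP n P d d0 j \<in> rmod_hom R (P (Suc j mod n)) (P (j mod n))"
  unfolding dP_eq
  by (rule rmod_hom_sgn_neg_closed[OF right_module_P_mod right_module_P_mod D_Suc_mod_hom])

lemma dP_dP:
  assumes x: "x \<in> carrier (P (Suc (Suc j) mod n))"
  shows "dP n P d d0 j (dP n P d d0 (Suc j) x) = \<zero>\<^bsub>P (j mod n)\<^esub>"
proof -
  let ?a = "Suc j mod n" and ?b = "Suc (Suc j) mod n"
  have Dx: "D ?b x \<in> carrier (P ?a)"
    using rmod_hom_closed[OF D_Suc_mod_hom x] .
  have "dP n P d d0 j (dP n P d d0 (Suc j) x) =
      sgn_neg (P (j mod n)) (sgn_exp j) (D ?a (sgn_neg (P ?a) (sgn_exp (Suc j)) (D ?b x)))"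
    using x Dx sgn_neg_closed[OF right_module_abelian_group[OF right_module_P_mod] Dx]
    by (simp add: dP_eq)
  also have "\<dots> = sgn_neg (P (j mod n)) (sgn_exp j + sgn_exp (Suc j)) (D ?a (D ?b x))"
    using rmod_hom_sgn_neg[OF right_module_P_mod right_module_P_mod D_Suc_mod_hom Dx]
      sgn_neg_sgn_neg[OF right_module_abelian_group[OF right_module_P_mod]
        rmod_hom_closed[OF D_Suc_mod_hom Dx]]
    by simp
  also have "D ?a (D ?b x) = \<zero>\<^bsub>P (j mod n)\<^esub>"
    using D_D[of ?b x] x n_pos mod_eq_prev[of j] mod_eq_prev[of "Suc j"] by simp
  finally show ?thesis
    using sgn_neg_zero[OF right_module_abelian_group[OF right_module_P_mod]] by simp
qed

lemma sgn_exp_shift: "sgn_exp (j + n) = n + sgn_exp j"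
proof -
  have mod: "Suc (j + n) mod n = Suc j mod n" and div: "Suc (j + n) div n = Suc (Suc j div n)"
    using n_pos by (simp_all add: add_Suc[symmetric] del: add_Suc)
  have "Suc j div n \<noteq> 0" if "Suc j mod n = 0"
  proof -
    have "Suc j div n * n = Suc j" using that div_mult_mod_eq[of "Suc j" n] by simp
    then show ?thesis by (metis mult_0 nat.simps(3))
  qed
  then show ?thesis
    unfolding sgn_exp_def mod div by (cases "Suc j div n") auto
qed

lemma dP_shift:
  assumes x: "x \<in> carrier (P (Suc j mod n))"
  shows "dP n P d d0 (j + n) x = sgn_neg (P (j mod n)) n (dP n P d d0 j x)"
proof -
  have mod: "Suc (j + n) mod n = Suc j mod n" by (metis add_Suc mod_add_self2)
  show ?thesis
    using x mod sgn_exp_shift[of j]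
      sgn_neg_sgn_neg[OF right_module_abelian_group[OF right_module_P_mod]
        rmod_hom_closed[OF D_Suc_mod_hom x]]
    by (simp add: dP_eq)
qed

end

locale periodic_hom_complex = periodic_complex R n P d d0
  for R :: "'g ring" and n and P :: "nat \<Rightarrow> ('g, 'p) rmodule" and d d0 +
  fixes N :: "('g, 'b) rmodule"
  assumes right_module_N: "right_module R N"
begin

abbreviation C :: "nat \<Rightarrow> ('p \<Rightarrow> 'b) monoid" where
  "C \<equiv> HomPc R N n P"

abbreviation \<delta> :: "nat \<Rightarrow> ('p \<Rightarrow> 'b) \<Rightarrow> 'p \<Rightarrow> 'b" where
  "\<delta> \<equiv> delPc n P d d0"

lemma delPc_eq: "\<delta> j = (\<lambda>f. \<lambda>x\<in>carrier (P (Suc j mod n)). f (dP n P d d0 j x))"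
  by (simp add: fun_eq_iff delPc_def)

sublocale cochain_complex C \<delta>
proof (rule cochain_complex.intro)
  show "comm_group (C j)" for j
    unfolding HomPc_def by (rule comm_group_homgrp[OF right_module_P_mod right_module_N])
  show "\<delta> j \<in> hom (C j) (C (Suc j))" for j
    unfolding delPc_eq HomPc_def by (rule homgrp_precompose_hom[OF right_module_P_mod dP_hom])
  fix j f assume "f \<in> carrier (C j)"
  then have f: "f \<in> rmod_hom R (P (j mod n)) N" by (simp add: HomPc_def homgrp_simps)
  have "f \<zero>\<^bsub>P (j mod n)\<^esub> = \<zero>\<^bsub>N\<^esub>"
    using abelian_group_hom.hom_zero[OF rmod_hom_abelian_group_hom[OF right_module_P_mod right_module_N f]] .
  then show "\<delta> (Suc j) (\<delta> j f) = \<one>\<^bsub>C (Suc (Suc j))\<^esub>"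
    using dP_dP rmod_hom_closed[OF dP_hom[of "Suc j"]]
    by (auto simp: delPc_def HomPc_def homgrp_simps intro!: restrict_ext)
qed

lemma C_shift: "C (j + n) = C j"
  by (simp add: HomPc_def)

lemma delPc_shift:
  assumes f: "f \<in> carrier (C j)"
  shows "\<delta> (j + n) f = (if even n then \<delta> j f else inv\<^bsub>C (Suc j)\<^esub> (\<delta> j f))"
proof -
  have fh: "f \<in> rmod_hom R (P (j mod n)) N" using f by (simp add: HomPc_def homgrp_simps)
  have mod: "Suc (j + n) mod n = Suc j mod n" by (metis add_Suc mod_add_self2)
  have shift: "\<delta> (j + n) f = (\<lambda>x\<in>carrier (P (Suc j mod n)). sgn_neg N n (\<delta> j f x))"
    using mod dP_shift rmod_hom_sgn_neg[OF right_module_P_mod right_module_N fh]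
      rmod_hom_closed[OF dP_hom]
    by (auto simp: delPc_def intro!: restrict_ext)
  have "\<delta> j f \<in> rmod_hom R (P (Suc j mod n)) N"
    using hom_in_carrier[OF \<delta>_hom f] by (simp add: HomPc_def homgrp_simps)
  then show ?thesis
    using shift homgrp_inv[OF right_module_P_mod right_module_N]
    by (auto simp: sgn_neg_def HomPc_def delPc_def intro!: restrict_ext)
qed

lemma cocyc_shift: "cocyc C \<delta> (j + n) = cocyc C \<delta> j"
proof -
  interpret G: group "C (Suc j)" by (rule group_C)
  have "\<delta> (j + n) f = \<one>\<^bsub>C (Suc j)\<^esub> \<longleftrightarrow> \<delta> j f = \<one>\<^bsub>C (Suc j)\<^esub>" if "f \<in> carrier (C j)" for f
    using delPc_shift[OF that] G.inv_eq_1_iff[OF hom_in_carrier[OF \<delta>_hom that]] by simp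
  then show ?thesis
    using C_shift[of j] C_shift[of "Suc j"] by (auto simp: cocyc_def)
qed

lemma cobd_shift:
  assumes i: "0 < i" shows "cobd C \<delta> (i + n) = cobd C \<delta> i"
proof -
  obtain k where k: "i = Suc k" using i by (cases i) auto
  interpret G: group "C k" by (rule group_C)
  interpret \<delta>: group_hom "C k" "C (Suc k)" "\<delta> k" by (rule group_hom_\<delta>)
  have "\<delta> (k + n) ` carrier (C k) = \<delta> k ` carrier (C k)"
  proof (cases "even n")
    case True
    then show ?thesis using delPc_shift by (auto simp: image_def)
  next
    case False
    then have "\<delta> (k + n) ` carrier (C k) = \<delta> k ` (\<lambda>f. inv\<^bsub>C k\<^esub> f) ` carrier (C k)"
      using delPc_shift \<delta>.hom_inv by (auto simp: image_def)
    then show ?thesis by (simp add: G.inv_image_carrier)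
  qed
  then show ?thesis using k C_shift[of k] by (simp add: cobd_def)
qed

lemma coh_shift: "0 < i \<Longrightarrow> coh C \<delta> (i + n) = coh C \<delta> i"
  unfolding coh_def using cocyc_shift[of i] cobd_shift[of i] C_shift[of i] by simp

section \<open>Comparison with the truncation\<close>

abbreviation Q :: "nat \<Rightarrow> ('p \<Rightarrow> 'b) monoid" where
  "Q \<equiv> HomQc R N n P"

abbreviation \<delta>Q :: "nat \<Rightarrow> ('p \<Rightarrow> 'b) \<Rightarrow> 'p \<Rightarrow> 'b" where
  "\<delta>Q \<equiv> delQc R N n P d d0"

abbreviation \<pi> :: "nat \<Rightarrow> ('p \<Rightarrow> 'b) \<Rightarrow> 'p \<Rightarrow> 'b" where
  "\<pi> \<equiv> piQ R N n P"

lemma HomQc_eq: "n \<le> j \<Longrightarrow> Q j = C j"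
  by (simp add: HomQc_def)

lemma delQc_eq: "n \<le> j \<Longrightarrow> \<delta>Q j = \<delta> j"
  by (simp add: delQc_def)

lemma cobd_HomQc_n: "cobd Q \<delta>Q n = {\<one>\<^bsub>C n\<^esub>}"
proof -
  have "n \<noteq> 0" "\<not> n \<le> n - 1" "Suc (n - 1) = n" using n_pos by auto
  then show ?thesis by (simp add: cobd_def HomQc_def delQc_def)
qed

lemma cocyc_HomQc_n: "cocyc Q \<delta>Q n = cocyc C \<delta> n"
  by (simp add: cocyc_def HomQc_eq delQc_eq)

lemma coh_HomQc_above: "n < j \<Longrightarrow> coh Q \<delta>Q j = coh C \<delta> j"
  by (simp add: coh_def cocyc_def cobd_def HomQc_eq delQc_eq)

lemma Hmap_class_n:
  assumes z: "z \<in> cocyc C \<delta> n"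
  shows "Hmap Q \<delta>Q C \<delta> \<pi> n (r_coset (Q n) (cobd Q \<delta>Q n) z) = r_coset (C n) (cobd C \<delta> n) z"
proof -
  interpret G: group "C n" by (rule group_C)
  have zC: "z \<in> carrier (C n)" using z by (simp add: cocyc_def)
  (* Q vanishes below degree n, so its degree-n coboundaries are trivial. *)
  have coset_z: "r_coset (Q n) (cobd Q \<delta>Q n) z = {z}"
    using zC by (simp add: cobd_HomQc_n HomQc_eq r_coset_def)
  have "{z} \<in> carrier (coh Q \<delta>Q n)"
    using z coset_z[symmetric] by (auto simp: coh_carrier cocyc_HomQc_n)
  then show ?thesis by (simp add: coset_z Hmap_def piQ_def)
qed

lemma Hmap_above:
  assumes j: "n < j"
  shows "Hmap Q \<delta>Q C \<delta> \<pi> j = (\<lambda>Y\<in>carrier (coh C \<delta> j). Y)"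
  using coh_some_repr j by (auto simp: Hmap_def coh_HomQc_above piQ_def intro!: restrict_ext)

lemma cobd_n_eq_precompose_d0:
  "cobd C \<delta> n = (\<lambda>f. \<lambda>x\<in>carrier (P 0). f (d0 x)) ` rmod_hom R (P (n - 1)) N"
proof -
  have e: "n \<noteq> 0" "Suc (n - 1) = n" "(n - 1) mod n = n - 1" using n_pos by auto
  have "\<delta> (n - 1) f = (\<lambda>x\<in>carrier (P 0). f (d0 x))" for f
    using e by (auto simp: delPc_def dP_def Let_def sgn_neg_def intro!: restrict_ext)
  then show ?thesis using e by (simp add: cobd_def HomPc_def homgrp_simps)
qed

lemma Hmap_n_onto:
  "(\<lambda>z. Hmap Q \<delta>Q C \<delta> \<pi> n (r_coset (Q n) (cobd Q \<delta>Q n) z)) ` cocyc Q \<delta>Q n = carrier (coh C \<delta> n)"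
  using Hmap_class_n by (simp add: coh_carrier cocyc_HomQc_n)

lemma Hmap_n_kernel:
  "{z \<in> cocyc Q \<delta>Q n. Hmap Q \<delta>Q C \<delta> \<pi> n (r_coset (Q n) (cobd Q \<delta>Q n) z) = \<one>\<^bsub>coh C \<delta> n\<^esub>} =
     (\<lambda>f. \<lambda>x\<in>carrier (P 0). f (d0 x)) ` rmod_hom R (P (n - 1)) N"
proof -
  have "{z \<in> cocyc Q \<delta>Q n. Hmap Q \<delta>Q C \<delta> \<pi> n (r_coset (Q n) (cobd Q \<delta>Q n) z) = \<one>\<^bsub>coh C \<delta> n\<^esub>} =
      {z \<in> cocyc C \<delta> n. r_coset (C n) (cobd C \<delta> n) z = \<one>\<^bsub>coh C \<delta> n\<^esub>}"
    using Hmap_class_n by (auto simp: cocyc_HomQc_n)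
  also have "\<dots> = cobd C \<delta> n"
    using coh_class_eq_one_iff cobd_subset_cocyc by blast
  finally show ?thesis by (simp add: cobd_n_eq_precompose_d0)
qed

lemma Hmap_above_iso:
  assumes i: "0 < i"
  shows "Hmap Q \<delta>Q C \<delta> \<pi> (i + n) \<in> iso (coh C \<delta> i) (coh C \<delta> (i + n))"
proof -
  interpret H: group "coh C \<delta> i" by (rule group_coh)
  have "(\<lambda>Y\<in>carrier (coh C \<delta> i). Y) \<in> iso (coh C \<delta> i) (coh C \<delta> i)"
    by (auto simp: iso_def hom_def bij_betw_def inj_on_def)
  then show ?thesis using Hmap_above[of "i + n"] coh_shift[OF i] i by simp
qed

end

lemma periodic_hom_complex_d0fun:
  assumes M: "right_module R M" and N: "right_module R N" and n: "0 < n"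
    and P: "\<And>i. i < n \<Longrightarrow> right_module R (P i)"
    and d_hom: "\<And>i. 1 \<le> i \<Longrightarrow> i < n \<Longrightarrow> d i \<in> rmod_hom R (P i) (P (i - 1))"
    and \<alpha>: "\<alpha> \<in> rmod_hom R (P 0) M" and \<beta>: "\<beta> \<in> rmod_hom R M (P (n - 1))"
    and \<alpha>_complex: "(if n = 1 then \<beta> ` carrier M else d 1 ` carrier (P 1)) \<subseteq>
                       {x \<in> carrier (P 0). \<alpha> x = \<zero>\<^bsub>M\<^esub>}"
    and d_complex: "\<And>i. 1 \<le> i \<Longrightarrow> i < n \<Longrightarrow>
                      (if i = n - 1 then \<beta> ` carrier M else d (Suc i) ` carrier (P (Suc i))) \<subseteq>
                      {x \<in> carrier (P i). d i x = \<zero>\<^bsub>P (i - 1)\<^esub>}"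
  shows "periodic_hom_complex R n P d (d0fun P \<alpha> \<beta>) N"
proof -
  have \<beta>_zero: "\<beta> \<zero>\<^bsub>M\<^esub> = \<zero>\<^bsub>P (n - 1)\<^esub>"
    using abelian_group_hom.hom_zero[OF rmod_hom_abelian_group_hom[OF M P \<beta>]] n by simp
  show ?thesis
  proof (intro periodic_hom_complex.intro periodic_complex.intro periodic_hom_complex_axioms.intro)
    show "d0fun P \<alpha> \<beta> \<in> rmod_hom R (P 0) (P (n - 1))"
      unfolding d0fun_def using P n \<alpha> \<beta> by (intro rmod_hom_compose) auto
  next
    fix i x assume i: "1 \<le> i" "Suc i < n" and x: "x \<in> carrier (P (Suc i))"
    moreover have "i \<noteq> n - 1" using i by linarith
    ultimately have "d (Suc i) ` carrier (P (Suc i)) \<subseteq> {x \<in> carrier (P i). d i x = \<zero>\<^bsub>P (i - 1)\<^esub>}"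
      using d_complex[of i] by simp
    then show "d i (d (Suc i) x) = \<zero>\<^bsub>P (i - 1)\<^esub>" using x by auto
  next
    fix x assume n2: "2 \<le> n" and x: "x \<in> carrier (P 0)"
    have "\<beta> ` carrier M \<subseteq> {y \<in> carrier (P (n - 1)). d (n - 1) y = \<zero>\<^bsub>P (n - 2)\<^esub>}"
      using d_complex[of "n - 1"] n2 by (simp add: numeral_2_eq_2)
    then show "d (n - 1) (d0fun P \<alpha> \<beta> x) = \<zero>\<^bsub>P (n - 2)\<^esub>"
      using x rmod_hom_closed[OF \<alpha>] by (auto simp: d0fun_def)
  next
    fix x assume "2 \<le> n" "x \<in> carrier (P 1)"
    then show "d0fun P \<alpha> \<beta> (d 1 x) = \<zero>\<^bsub>P (n - 1)\<^esub>"
      using \<alpha>_complex \<beta>_zero by (auto simp: d0fun_def)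
  next
    fix x assume n1: "n = 1" and x: "x \<in> carrier (P 0)"
    have "\<beta> (\<alpha> x) \<in> {y \<in> carrier (P 0). \<alpha> y = \<zero>\<^bsub>M\<^esub>}"
      using \<alpha>_complex n1 imageI[OF rmod_hom_closed[OF \<alpha> x], of \<beta>] by auto
    then show "d0fun P \<alpha> \<beta> (d0fun P \<alpha> \<beta> x) = \<zero>\<^bsub>P 0\<^esub>"
      using x n1 \<beta>_zero by (simp add: d0fun_def)
  qed (use n P d_hom N in auto)
qed

theorem lemma3p7:
  fixes K :: "'k ring" and R :: "'g ring" and \<phi> :: "'k \<Rightarrow> 'g"
    and M :: "('g, 'm) rmodule" and N :: "('g, 'b) rmodule"
    and P :: "nat \<Rightarrow> ('g, 'p) rmodule" and d :: "nat \<Rightarrow> 'p \<Rightarrow> 'p"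
    and \<alpha> :: "'p \<Rightarrow> 'm" and \<beta> :: "'m \<Rightarrow> 'p" and n :: nat
  assumes alg: "k_algebra K R \<phi>"
    and modM: "right_module R M" and modN: "right_module R N"
    and n1: "1 \<le> n"
    and modP: "\<forall>i<n. right_module R (P i) \<and> fg_projective R (P i)"
    and homd: "\<forall>i. 1 \<le> i \<and> i < n \<longrightarrow> d i \<in> rmod_hom R (P i) (P (i - 1))"
    and hom\<alpha>: "\<alpha> \<in> rmod_hom R (P 0) M"
    and hom\<beta>: "\<beta> \<in> rmod_hom R M (P (n - 1))"
    and ex_M: "inj_on \<beta> (carrier M)"
    and ex_P0: "{x \<in> carrier (P 0). \<alpha> x = \<zero>\<^bsub>M\<^esub>} =
                 (if n = 1 then \<beta> ` carrier M else d 1 ` carrier (P 1))"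
    and ex_Pi: "\<forall>i. 1 \<le> i \<and> i < n \<longrightarrow>
                 {x \<in> carrier (P i). d i x = \<zero>\<^bsub>P (i - 1)\<^esub>} =
                 (if i = n - 1 then \<beta> ` carrier M else d (Suc i) ` carrier (P (Suc i)))"
    and ex_M': "\<alpha> ` carrier (P 0) = carrier M"
  shows
    "let d0 = d0fun P \<alpha> \<beta>;
         C = HomPc R N n P; \<delta> = delPc n P d d0;
         Q = HomQc R N n P; \<delta>Q = delQc R N n P d d0;
         \<pi> = piQ R N n P;
         Z = cocyc Q \<delta>Q n;
         h = (\<lambda>z. Hmap Q \<delta>Q C \<delta> \<pi> n (r_coset (Q n) (cobd Q \<delta>Q n) z))
     in h ` Z = carrier (coh C \<delta> n)
      \<and> {z \<in> Z. h z = \<one>\<^bsub>coh C \<delta> n\<^esub>} =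
          (\<lambda>f. \<lambda>x\<in>carrier (P 0). f (d0 x)) ` rmod_hom R (P (n - 1)) N
      \<and> (\<forall>i>0. Hmap Q \<delta>Q C \<delta> \<pi> (i + n) \<in> iso (coh C \<delta> i) (coh C \<delta> (i + n)))"
proof -
  have "periodic_hom_complex R n P d (d0fun P \<alpha> \<beta>) N"
  proof (rule periodic_hom_complex_d0fun[OF modM modN])
    show "(if n = 1 then \<beta> ` carrier M else d 1 ` carrier (P 1)) \<subseteq>
        {x \<in> carrier (P 0). \<alpha> x = \<zero>\<^bsub>M\<^esub>}"
      using ex_P0 by simp
    show "(if i = n - 1 then \<beta> ` carrier M else d (Suc i) ` carrier (P (Suc i))) \<subseteq>
        {x \<in> carrier (P i). d i x = \<zero>\<^bsub>P (i - 1)\<^esub>}" if "1 \<le> i" "i < n" for i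
      using ex_Pi that by simp
  qed (use n1 modP homd hom\<alpha> hom\<beta> in auto)
  then interpret periodic_hom_complex R n P d "d0fun P \<alpha> \<beta>" N .
  show ?thesis
    unfolding Let_def using Hmap_n_onto Hmap_n_kernel Hmap_above_iso by blast
qed

end
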